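(* Let $n\geq3$ and $\lambda=(\lambda_1,\dots,\lambda_n)\in\mathbb{R}^n$ with $\lambda_1+\dots+\lambda_n>0$ and $N(\lambda)=n$. Then \[\sum_{P\in\mathcal{P}^0_{ord}(\lambda)}(-1)^{|P|}\varepsilon(P)\varepsilon'(P)=0.\]
   Context: $s_J(\lambda)=\sum_{i\in J}\lambda_i$ for $J\subset\{1,\dots,n\}$. $\delta(\lambda)$ is the minimum of $s_J(\lambda)/|J|$ over subsets $J$ with $s_J(\lambda)>0$; when $\delta(\lambda)>0$, $N(\lambda)$ is the minimum of $|J|$ over subsets $J$ with $s_J(\lambda)/|J|=\delta(\lambda)$. Ordered partitions $P=(I_1,\dots,I_k)$ of $\{1,\dots,n\}$ into nonempty blocks, $|P|=k$. $\mathcal{P}_{ord}(\lambda)$: those with $s_{I_1}(\lambda)+\dots+s_{I_i}(\lambda)>0$ for all $i$. $\mathcal{P}^0_{ord}(\lambda)$: those in $\mathcal{P}_{ord}(\lambda)$ having at most one block of odd cardinality. $\varepsilon(P)=\mathrm{sgn}(\sigma_P)$, where $\sigma_P$ is the unique permutation with $\sigma_P^{-1}$ mapping $\{n_1+\dots+n_i+1,\dots,n_1+\dots+n_{i+1}\}$ increasingly onto $I_{i+1}$ ($n_i=|I_i|$); $\varepsilon'(P)=(-1)^{\frac12\sum_i|I_i|(|I_i|-1)}$. *)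

theory Defs
  imports Complex_Main "HOL-Combinatorics.Permutations"
begin

text \<open>Vectors lambda in R^n are functions nat => real, only the values on {1..n} matter.\<close>

definition sJ :: "(nat \<Rightarrow> real) \<Rightarrow> nat set \<Rightarrow> real" where
  "sJ lam J = (\<Sum>i\<in>J. lam i)"

definition delta :: "nat \<Rightarrow> (nat \<Rightarrow> real) \<Rightarrow> real" where
  "delta n lam = Min {sJ lam J / real (card J) | J. J \<subseteq> {1..n} \<and> sJ lam J > 0}"

definition Nlam :: "nat \<Rightarrow> (nat \<Rightarrow> real) \<Rightarrow> nat" where
  "Nlam n lam = Min {card J | J. J \<subseteq> {1..n} \<and> sJ lam J > 0
                      \<and> sJ lam J / real (card J) = delta n lam}"

definition ordered_partitions :: "nat \<Rightarrow> nat set list set" where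
  "ordered_partitions n = {P. (\<forall>B\<in>set P. B \<noteq> {}) \<and>
      (\<forall>i<length P. \<forall>j<length P. i \<noteq> j \<longrightarrow> P ! i \<inter> P ! j = {}) \<and>
      \<Union>(set P) = {1..n}}"

definition P_ord :: "nat \<Rightarrow> (nat \<Rightarrow> real) \<Rightarrow> nat set list set" where
  "P_ord n lam = {P \<in> ordered_partitions n. \<forall>i<length P. (\<Sum>j\<le>i. sJ lam (P ! j)) > 0}"

definition P0_ord :: "nat \<Rightarrow> (nat \<Rightarrow> real) \<Rightarrow> nat set list set" where
  "P0_ord n lam = {P \<in> P_ord n lam. card {i. i < length P \<and> odd (card (P ! i))} \<le> 1}"

definition sigma_inv :: "nat set list \<Rightarrow> nat \<Rightarrow> nat" where
  "sigma_inv P = (let L = concat (map sorted_list_of_set P) in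
      (\<lambda>k. if k \<in> {1..length L} then L ! (k - 1) else k))"

definition sigma :: "nat set list \<Rightarrow> nat \<Rightarrow> nat" where
  "sigma P = inv (sigma_inv P)"

definition eps :: "nat set list \<Rightarrow> int" where
  "eps P = sign (sigma P)"

definition eps' :: "nat set list \<Rightarrow> int" where
  "eps' P = (-1) ^ ((\<Sum>i<length P. card (P ! i) * (card (P ! i) - 1)) div 2)"

end

theory Submission
  imports Defs
begin

(* Let mu = lam - m with m the mean of lam_1, ..., lam_n. The hypothesis N(lam) = n forces
   delta(lam) = m and makes {1..n} the only subset attaining it, so every proper nonempty
   J has s_J(mu) <> 0, and s_J(mu) > 0 exactly when s_J(lam) > 0. Hence P lies in P_ord(lam)
   iff all proper partial sums of s_{I_1}(mu), s_{I_2}(mu), ... are positive. These block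
   sums add up to 0, so by the cycle lemma exactly one cyclic rotation of every ordered
   partition has this property.
   Moving a block I to the end changes eps by (-1)^(|I| (n - |I|)), which is 1 when at most
   one block is odd, and leaves |P| and eps' unchanged. The sum therefore equals the sum of
   the weights over the ordered partitions with at most one odd block and n in the first
   block, and on those a sign-reversing involution cancels all terms: if some pair
   {2j - 1, 2j} with 2j < n is split, apply the transposition of the first such pair (only
   eps changes sign); otherwise split {1,2} off the block containing it, or merge a block
   {1,2} into its left neighbour (only |P| changes, by one). As n >= 3 lies in the first
   block, that block is never {1,2}. *)

section \<open>Inversions and the sign of a list permutation\<close>

fun inversions :: "nat list \<Rightarrow> nat" where
  "inversions [] = 0"
| "inversions (x # xs) = length (filter (\<lambda>y. y < x) xs) + inversions xs"

fun cross_inversions :: "nat list \<Rightarrow> nat list \<Rightarrow> nat" where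
  "cross_inversions [] ys = 0"
| "cross_inversions (x # xs) ys = length (filter (\<lambda>y. y < x) ys) + cross_inversions xs ys"

lemma inversions_append:
  "inversions (xs @ ys) = inversions xs + inversions ys + cross_inversions xs ys"
  by (induction xs) auto

lemma cross_inversions_append_left:
  "cross_inversions (xs @ ys) zs = cross_inversions xs zs + cross_inversions ys zs"
  by (induction xs) auto

lemma cross_inversions_append_right:
  "cross_inversions xs (ys @ zs) = cross_inversions xs ys + cross_inversions xs zs"
  by (induction xs) auto

lemma cross_inversions_Cons_right:
  "cross_inversions xs (y # ys) = length (filter (\<lambda>x. y < x) xs) + cross_inversions xs ys"
  by (induction xs) auto

lemma cross_inversions_swap:
  assumes "distinct (xs @ ys)"
  shows "cross_inversions xs ys + cross_inversions ys xs = length xs * length ys"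
  using assms
proof (induction ys)
  case Nil
  then show ?case by (induction xs) auto
next
  case (Cons y ys)
  have "y \<notin> set xs" using Cons.prems by auto
  then have "length (filter (\<lambda>x. y < x) xs) + length (filter (\<lambda>x. x < y) xs) = length xs"
    by (induction xs) (auto simp: linorder_neq_iff)
  with Cons show ?case by (simp add: cross_inversions_Cons_right)
qed

lemma minus_one_power_inversions_swap:
  assumes "distinct (A @ B)"
  shows "(-1::int) ^ inversions (X @ B @ A @ Y)
       = (-1) ^ (length A * length B) * (-1) ^ inversions (X @ A @ B @ Y)"
proof -
  have "inversions (X @ B @ A @ Y) + 2 * cross_inversions A B
      = inversions (X @ A @ B @ Y) + length A * length B"
    using cross_inversions_swap[OF assms]
    by (simp add: inversions_append cross_inversions_append_left cross_inversions_append_right)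
  then have "(-1::int) ^ (inversions (X @ B @ A @ Y) + 2 * cross_inversions A B)
      = (-1) ^ (inversions (X @ A @ B @ Y) + length A * length B)"
    by simp
  then show ?thesis by (simp add: power_add mult.commute)
qed

definition list_perm :: "nat list \<Rightarrow> nat \<Rightarrow> nat" where
  "list_perm L k = (if k \<in> {1..length L} then L ! (k - 1) else k)"

lemma list_perm_permutes:
  assumes "distinct L" "set L = {1..length L}"
  shows "list_perm L permutes {1..length L}"
proof (rule bij_imp_permutes)
  have "list_perm L ` {1..length L} = set L"
  proof
    show "set L \<subseteq> list_perm L ` {1..length L}"
    proof
      fix y assume "y \<in> set L"
      then obtain i where "i < length L" "y = L ! i" by (auto simp: in_set_conv_nth)
      then show "y \<in> list_perm L ` {1..length L}"
        by (auto simp: list_perm_def image_iff intro!: bexI[of _ "Suc i"])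
    qed
  qed (auto simp: list_perm_def)
  moreover have "inj_on (list_perm L) {1..length L}"
    using assms(1) by (auto simp: inj_on_def list_perm_def nth_eq_iff_index_eq)
  ultimately show "bij_betw (list_perm L) {1..length L} {1..length L}"
    using assms(2) by (simp add: bij_betw_def)
qed (auto simp: list_perm_def)

lemma list_perm_swap_adjacent:
  "list_perm (X @ [a, b] @ Y)
     = list_perm (X @ [b, a] @ Y) \<circ> Transposition.transpose (Suc (length X)) (Suc (Suc (length X)))"
  by (auto simp: fun_eq_iff list_perm_def nth_append Transposition.transpose_def
      split: nat.split)

lemma list_perm_sorted:
  assumes "sorted L" "distinct L" "set L = {1..length L}"
  shows "list_perm L = id"
proof -
  have L: "L = [1..<Suc (length L)]"
    using sorted_distinct_set_unique[of L "[1..<Suc (length L)]"] assms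
    by (simp del: upt_Suc add: atLeastLessThanSuc_atLeastAtMost)
  have nth_L: "L ! (k - 1) = k" if "k \<in> {1..length L}" for k
    using that by (subst L) (auto simp del: upt_Suc)
  show ?thesis
  proof
    fix k
    show "list_perm L k = id k"
      using nth_L[of k] by (simp add: list_perm_def)
  qed
qed

lemma inversions_sorted: "sorted L \<Longrightarrow> distinct L \<Longrightarrow> inversions L = 0"
proof (induction L)
  case (Cons x xs)
  then have "filter (\<lambda>y. y < x) xs = []" by (auto simp: filter_empty_conv)
  with Cons show ?case by simp
qed simp

lemma not_sorted_adjacent:
  assumes "\<not> sorted (L :: nat list)"
  obtains X a b Y where "L = X @ [a, b] @ Y" "b < a"
proof -
  obtain i where i: "Suc i < length L" "L ! Suc i < L ! i"
    using assms by (auto simp: sorted_iff_nth_Suc not_le)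
  have "L = take i L @ [L ! i, L ! Suc i] @ drop (Suc (Suc i)) L"
    using i(1) by (simp add: Cons_nth_drop_Suc)
  then show ?thesis using i(2) by (rule that)
qed

lemma sign_list_perm:
  "distinct L \<Longrightarrow> set L = {1..length L} \<Longrightarrow> sign (list_perm L) = (-1) ^ inversions L"
proof (induction "inversions L" arbitrary: L rule: less_induct)
  case less
  show ?case
  proof (cases "sorted L")
    case True
    then show ?thesis using less.prems by (simp add: list_perm_sorted inversions_sorted)
  next
    case False
    then obtain X a b Y where L: "L = X @ [a, b] @ Y" and "b < a" by (rule not_sorted_adjacent)
    define L' where "L' = X @ [b, a] @ Y"
    have inv: "inversions L = Suc (inversions L')"
      using \<open>b < a\<close> by (simp add: L L'_def inversions_append cross_inversions_append_left
          cross_inversions_append_right cross_inversions_Cons_right)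
    have L': "distinct L'" "set L' = {1..length L'}" using less.prems by (auto simp: L L'_def)
    have "permutation (list_perm L')"
      using list_perm_permutes[OF L'] permutation_permutes by blast
    then have "sign (list_perm L) = sign (list_perm L') *
        sign (Transposition.transpose (Suc (length X)) (Suc (Suc (length X))))"
      unfolding L list_perm_swap_adjacent L'_def[symmetric]
      by (rule sign_compose[OF _ permutation_swap_id])
    also have "\<dots> = (-1) ^ inversions L"
      using less.hyps[OF _ L'] inv by (simp add: sign_swap_id)
    finally show ?thesis .
  qed
qed

section \<open>Ordered partitions as lists of blocks\<close>

definition concat_blocks :: "nat set list \<Rightarrow> nat list" where
  "concat_blocks P = concat (map sorted_list_of_set P)"

lemma concat_blocks_simps [simp]:
  "concat_blocks [] = []"
  "concat_blocks (B # P) = sorted_list_of_set B @ concat_blocks P"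
  "concat_blocks (P @ Q) = concat_blocks P @ concat_blocks Q"
  by (simp_all add: concat_blocks_def)

lemma set_concat_blocks: "\<forall>B\<in>set P. finite B \<Longrightarrow> set (concat_blocks P) = \<Union>(set P)"
  by (induction P) auto

lemma distinct_concat_blocks_iff:
  assumes "\<forall>B\<in>set P. finite B"
  shows "distinct (concat_blocks P) \<longleftrightarrow>
    (\<forall>i<length P. \<forall>j<length P. i \<noteq> j \<longrightarrow> P ! i \<inter> P ! j = {})"
  using assms
proof (induction P)
  case (Cons B P)
  have "(\<forall>i<length (B # P). \<forall>j<length (B # P). i \<noteq> j \<longrightarrow> (B # P) ! i \<inter> (B # P) ! j = {})
    \<longleftrightarrow> (\<forall>i<length P. \<forall>j<length P. i \<noteq> j \<longrightarrow> P ! i \<inter> P ! j = {}) \<and>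
        (\<forall>j<length P. B \<inter> P ! j = {})"
    unfolding length_Cons All_less_Suc2 by (simp add: Int_commute) blast
  moreover have "B \<inter> \<Union>(set P) = {} \<longleftrightarrow> (\<forall>C\<in>set P. B \<inter> C = {})"
    by blast
  ultimately show ?case
    using Cons by (simp add: set_concat_blocks all_set_conv_all_nth)
qed simp

definition is_ord_partition :: "nat \<Rightarrow> nat set list \<Rightarrow> bool" where
  "is_ord_partition n P \<longleftrightarrow> (\<forall>B\<in>set P. B \<noteq> {} \<and> finite B) \<and>
     distinct (concat_blocks P) \<and> set (concat_blocks P) = {1..n}"

lemma ordered_partitions_iff: "P \<in> ordered_partitions n \<longleftrightarrow> is_ord_partition n P"
proof
  assume P: "P \<in> ordered_partitions n"
  then have "\<forall>B\<in>set P. B \<subseteq> {1..n}"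
    unfolding ordered_partitions_def by blast
  then have "\<forall>B\<in>set P. finite B"
    using finite_subset by blast
  with P show "is_ord_partition n P"
    unfolding ordered_partitions_def is_ord_partition_def
    by (simp add: distinct_concat_blocks_iff set_concat_blocks)
next
  assume P: "is_ord_partition n P"
  then have "\<forall>B\<in>set P. finite B"
    unfolding is_ord_partition_def by blast
  with P show "P \<in> ordered_partitions n"
    unfolding ordered_partitions_def is_ord_partition_def
    by (simp add: distinct_concat_blocks_iff set_concat_blocks)
qed

lemma is_ord_partition_Union:
  "is_ord_partition n P \<Longrightarrow> \<Union>(set P) = {1..n}"
  by (simp add: ordered_partitions_iff[symmetric] ordered_partitions_def)

lemma is_ord_partition_block_unique:
  assumes "is_ord_partition n P" "i < length P" "j < length P" "x \<in> P ! i" "x \<in> P ! j"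
  shows "i = j"
  using assms unfolding ordered_partitions_iff[symmetric] ordered_partitions_def by blast

lemma length_concat_blocks: "is_ord_partition n P \<Longrightarrow> length (concat_blocks P) = n"
  unfolding is_ord_partition_def by (metis card_atLeastAtMost diff_Suc_1 distinct_card)

lemma is_ord_partition_rotate1: "is_ord_partition n P \<Longrightarrow> is_ord_partition n (rotate1 P)"
  by (cases P) (auto simp: is_ord_partition_def)

lemma is_ord_partition_rotate: "is_ord_partition n P \<Longrightarrow> is_ord_partition n (rotate k P)"
  by (induction k) (simp_all add: is_ord_partition_rotate1)

section \<open>The weight of an ordered partition\<close>

lemma eps_eq_sign_list_perm:
  assumes "is_ord_partition n P"
  shows "eps P = sign (list_perm (concat_blocks P))"
proof -
  have w: "distinct (concat_blocks P)" "set (concat_blocks P) = {1..length (concat_blocks P)}"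
    using assms length_concat_blocks[OF assms] by (auto simp: is_ord_partition_def)
  have "sigma_inv P = list_perm (concat_blocks P)"
    by (simp add: fun_eq_iff sigma_inv_def list_perm_def concat_blocks_def Let_def)
  moreover have "permutation (list_perm (concat_blocks P))"
    using list_perm_permutes[OF w] permutation_permutes by blast
  ultimately show ?thesis by (simp add: eps_def sigma_def sign_inverse)
qed

lemma eps_eq_inversions:
  assumes "is_ord_partition n P"
  shows "eps P = (-1) ^ inversions (concat_blocks P)"
  using assms length_concat_blocks[OF assms] sign_list_perm[of "concat_blocks P"]
  by (simp add: eps_eq_sign_list_perm[OF assms] is_ord_partition_def)

lemma eps'_eq_sum_list: "eps' P = (-1) ^ (sum_list (map (\<lambda>B. card B * (card B - 1)) P) div 2)"
  by (simp add: eps'_def sum_list_sum_nth atLeast0LessThan)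

definition weight :: "nat set list \<Rightarrow> int" where
  "weight P = (-1) ^ length P * eps P * eps' P"

definition odd_blocks :: "nat set list \<Rightarrow> nat" where
  "odd_blocks P = length (filter (\<lambda>B. odd (card B)) P)"

lemma card_odd_blocks: "card {i. i < length P \<and> odd (card (P ! i))} = odd_blocks P"
  by (simp add: odd_blocks_def length_filter_conv_card)

lemma odd_blocks_rotate1: "odd_blocks (rotate1 P) = odd_blocks P"
  by (cases P) (simp_all add: odd_blocks_def)

lemma odd_blocks_rotate: "odd_blocks (rotate k P) = odd_blocks P"
  by (induction k) (simp_all add: odd_blocks_rotate1)

lemma length_concat_blocks_sum_list:
  "\<forall>B\<in>set P. finite B \<Longrightarrow> length (concat_blocks P) = sum_list (map card P)"
  by (induction P) auto

lemma weight_rotate1: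
  assumes P: "is_ord_partition n P" and odd: "odd_blocks P \<le> 1"
  shows "weight (rotate1 P) = weight P"
proof (cases P)
  case (Cons B Q)
  have fin: "\<forall>C\<in>set P. finite C" and dist: "distinct (sorted_list_of_set B @ concat_blocks Q)"
    using P by (auto simp: is_ord_partition_def Cons)
  have "even (card B * sum_list (map card Q))"
  proof (cases "even (card B)")
    case False
    with odd have "\<forall>C\<in>set Q. even (card C)"
      by (auto simp: Cons odd_blocks_def filter_empty_conv)
    then have "even (sum_list (map card Q))"
      by (induction Q) auto
    then show ?thesis by simp
  qed simp
  then have "eps (Q @ [B]) = eps (B # Q)"
    using minus_one_power_inversions_swap[OF dist, of "[]" "[]"] fin
      eps_eq_inversions[OF P] eps_eq_inversions[OF is_ord_partition_rotate1[OF P]]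
    by (simp add: Cons length_concat_blocks_sum_list)
  then show ?thesis by (simp add: Cons weight_def eps'_eq_sum_list add.commute)
qed simp

lemma weight_rotate:
  "is_ord_partition n P \<Longrightarrow> odd_blocks P \<le> 1 \<Longrightarrow> weight (rotate k P) = weight P"
proof (induction k)
  case (Suc k)
  then show ?case
    using weight_rotate1[of n "rotate k P"] by (simp add: is_ord_partition_rotate odd_blocks_rotate)
qed simp

lemma sorted_list_of_set_Un_less:
  assumes "finite D" "finite B" "\<forall>x\<in>D. \<forall>y\<in>B. x < y"
  shows "sorted_list_of_set (D \<union> B) = sorted_list_of_set D @ sorted_list_of_set B"
proof -
  define xs where "xs = sorted_list_of_set D @ sorted_list_of_set B"
  have "sorted xs" "distinct xs" "set xs = D \<union> B"
    using assms by (auto simp: xs_def sorted_append less_imp_le)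
  have "sorted_list_of_set (set xs) = xs"
    using \<open>sorted xs\<close> \<open>distinct xs\<close>
    by (simp add: sorted_list_of_set_sort_remdups distinct_remdups_id sorted_sort_id)
  with \<open>set xs = D \<union> B\<close> show ?thesis by (simp add: xs_def)
qed

context
  fixes A C :: "nat set list" and B D :: "nat set"
  assumes fin: "finite B" "finite D" and less: "\<forall>x\<in>D. \<forall>y\<in>B. x < y"
begin

lemma concat_blocks_merge:
  "concat_blocks (A @ [D \<union> B] @ C)
     = concat_blocks A @ sorted_list_of_set D @ sorted_list_of_set B @ concat_blocks C"
  using sorted_list_of_set_Un_less[OF fin(2,1) less] by simp

lemma is_ord_partition_merge_iff:
  assumes "B \<noteq> {}" "D \<noteq> {}"
  shows "is_ord_partition n (A @ [D \<union> B] @ C) \<longleftrightarrow> is_ord_partition n (A @ [B, D] @ C)"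
  using assms fin unfolding is_ord_partition_def concat_blocks_merge by (simp; blast)

lemma card_merge: "card (D \<union> B) = card D + card B"
  using fin less by (intro card_Un_disjoint) auto

lemma odd_blocks_merge:
  "even (card D) \<Longrightarrow> odd_blocks (A @ [D \<union> B] @ C) = odd_blocks (A @ [B, D] @ C)"
  by (simp add: odd_blocks_def card_merge)

lemma weight_merge:
  assumes P: "is_ord_partition n (A @ [B, D] @ C)" and even: "even (card D)"
  shows "weight (A @ [D \<union> B] @ C) = - weight (A @ [B, D] @ C)"
proof -
  define S M where "S = A @ [B, D] @ C" and "M = A @ [D \<union> B] @ C"
  have "B \<noteq> {}" "D \<noteq> {}"
    using P by (auto simp: is_ord_partition_def)
  then have M: "is_ord_partition n M"
    using P is_ord_partition_merge_iff unfolding M_def by blast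
  have "distinct (sorted_list_of_set B @ sorted_list_of_set D)"
    using P fin by (auto simp: is_ord_partition_def)
  from minus_one_power_inversions_swap[OF this, of "concat_blocks A" "concat_blocks C"]
  have "eps M = eps S"
    using even fin eps_eq_inversions[OF M] eps_eq_inversions[OF P]
    by (simp add: S_def M_def sorted_list_of_set_Un_less[OF fin(2,1) less])
  moreover have "eps' M = eps' S"
  proof -
    define g where "g k = k * (k - 1)" for k :: nat
    define r where "r = sum_list (map (\<lambda>B. card B * (card B - 1)) A)
      + sum_list (map (\<lambda>B. card B * (card B - 1)) C)"
    have "g (card D + card B) = g (card D) + g (card B) + 2 * (card D * card B)"
      by (cases "card D"; cases "card B") (simp_all add: g_def algebra_simps)
    then have "(r + g (card D + card B)) div 2
        = (r + g (card B) + g (card D)) div 2 + card D * card B"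
      by simp
    then show ?thesis
      using even by (simp add: S_def M_def eps'_eq_sum_list card_merge r_def g_def power_add
          add_ac power_mult)
  qed
  ultimately show ?thesis by (simp add: S_def M_def weight_def)
qed

end

lemma sorted_list_of_set_image_strict_mono_on:
  assumes "finite B" "strict_mono_on B f"
  shows "sorted_list_of_set (f ` B) = map f (sorted_list_of_set B)"
proof -
  define xs where "xs = map f (sorted_list_of_set B)"
  have "sorted_wrt (<) xs"
    unfolding xs_def sorted_wrt_map using strict_sorted_list_of_set[of B]
    by (rule sorted_wrt_mono_rel[rotated]) (use assms in \<open>auto simp: strict_mono_on_def\<close>)
  then have "sorted_list_of_set (set xs) = xs"
    by (simp add: strict_sorted_iff sorted_list_of_set_sort_remdups distinct_remdups_id
        sorted_sort_id)
  then show ?thesis using assms(1) by (simp add: xs_def)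
qed

lemma concat_blocks_map_image:
  "\<forall>B\<in>set P. finite B \<and> strict_mono_on B f \<Longrightarrow>
    concat_blocks (map ((`) f) P) = map f (concat_blocks P)"
  by (induction P) (auto simp: sorted_list_of_set_image_strict_mono_on)

lemma list_perm_map:
  assumes "f permutes {1..length L}"
  shows "list_perm (map f L) = f \<circ> list_perm L"
  using permutes_not_in[OF assms] by (auto simp: fun_eq_iff list_perm_def)

context
  fixes f :: "nat \<Rightarrow> nat" and n :: nat and P :: "nat set list"
  assumes f: "f permutes {1..n}" and P: "is_ord_partition n P"
    and mono: "\<forall>B\<in>set P. strict_mono_on B f"
begin

lemma concat_blocks_map_image_perm: "concat_blocks (map ((`) f) P) = map f (concat_blocks P)"
  using P mono by (intro concat_blocks_map_image) (auto simp: is_ord_partition_def)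

lemma is_ord_partition_map_image: "is_ord_partition n (map ((`) f) P)"
  using P inj_on_subset[OF permutes_inj[OF f] subset_UNIV] permutes_image[OF f]
  by (auto simp: is_ord_partition_def concat_blocks_map_image_perm distinct_map)

lemma odd_blocks_map_image: "odd_blocks (map ((`) f) P) = odd_blocks P"
  using permutes_inj[OF f]
  by (simp add: odd_blocks_def filter_map comp_def card_image inj_on_subset[of f UNIV])

lemma weight_map_image: "weight (map ((`) f) P) = sign f * weight P"
proof -
  have w: "distinct (concat_blocks P)" "set (concat_blocks P) = {1..length (concat_blocks P)}"
    using P length_concat_blocks[OF P] by (auto simp: is_ord_partition_def)
  have "permutation f" "permutation (list_perm (concat_blocks P))"
    using f list_perm_permutes[OF w] permutation_permutes by auto
  then have "eps (map ((`) f) P) = sign f * eps P"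
    using f length_concat_blocks[OF P]
    unfolding eps_eq_sign_list_perm[OF is_ord_partition_map_image] eps_eq_sign_list_perm[OF P]
      concat_blocks_map_image_perm
    by (simp add: list_perm_map sign_compose)
  moreover have "eps' (map ((`) f) P) = eps' P"
    using permutes_inj[OF f]
    by (simp add: eps'_eq_sum_list comp_def card_image inj_on_subset[of f UNIV])
  ultimately show ?thesis by (simp add: weight_def)
qed

end

section \<open>Centring the weights\<close>

definition centred :: "nat \<Rightarrow> (nat \<Rightarrow> real) \<Rightarrow> nat \<Rightarrow> real" where
  "centred n lam i = lam i - (\<Sum>j=1..n. lam j) / real n"

lemma sum_centred:
  "sum (centred n lam) J = sum lam J - real (card J) * ((\<Sum>j=1..n. lam j) / real n)"
  by (simp add: centred_def sum_subtractf)

lemma sum_centred_full: "n \<ge> 1 \<Longrightarrow> sum (centred n lam) {1..n} = 0"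
  by (simp add: sum_centred)

lemma finite_averages:
  "finite {sJ lam J / real (card J) | J. J \<subseteq> {1..n} \<and> sJ lam J > 0}"
  by (rule finite_subset[of _ "(\<lambda>J. sJ lam J / real (card J)) ` Pow {1..n}"]) auto

context
  fixes n :: nat and lam :: "nat \<Rightarrow> real"
  assumes pos: "0 < (\<Sum>i=1..n. lam i)" and N: "Nlam n lam = n"
begin

lemma delta_minimizer_eq_full:
  assumes J: "J \<subseteq> {1..n}" "0 < sJ lam J" "sJ lam J / real (card J) = delta n lam"
  shows "J = {1..n}"
proof -
  let ?T = "{card J | J. J \<subseteq> {1..n} \<and> sJ lam J > 0 \<and> sJ lam J / real (card J) = delta n lam}"
  have "finite ?T"
    by (rule finite_subset[of _ "card ` Pow {1..n}"]) auto
  moreover have "card J \<in> ?T" using J by blast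
  ultimately have "Nlam n lam \<le> card J"
    unfolding Nlam_def by (rule Min_le)
  then have "n \<le> card J" using N by simp
  moreover have "card J \<le> n"
    using card_mono[OF _ J(1)] by simp
  ultimately show ?thesis
    using J(1) by (intro card_subset_eq) auto
qed

lemma delta_le_average:
  assumes "J \<subseteq> {1..n}" "0 < sJ lam J"
  shows "delta n lam \<le> sJ lam J / real (card J)"
  using finite_averages assms unfolding delta_def by (intro Min_le) auto

lemma delta_eq_mean: "delta n lam = (\<Sum>i=1..n. lam i) / real n"
proof -
  let ?S = "{sJ lam J / real (card J) | J. J \<subseteq> {1..n} \<and> sJ lam J > 0}"
  have "?S \<noteq> {}"
    using pos by (auto simp: sJ_def)
  then have "delta n lam \<in> ?S"
    unfolding delta_def by (rule Min_in[OF finite_averages])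
  then obtain J where J: "J \<subseteq> {1..n}" "0 < sJ lam J" "delta n lam = sJ lam J / real (card J)"
    by blast
  then have "J = {1..n}" using delta_minimizer_eq_full by simp
  with J(3) show ?thesis by (simp add: sJ_def)
qed

lemma mean_less_average:
  assumes "J \<subseteq> {1..n}" "J \<noteq> {1..n}" "0 < sum lam J"
  shows "real (card J) * ((\<Sum>i=1..n. lam i) / real n) < sum lam J"
proof -
  have J: "finite J" "card J > 0"
    using assms by (auto simp: finite_subset card_gt_0_iff)
  have "sJ lam J / real (card J) \<noteq> delta n lam"
    using delta_minimizer_eq_full[of J] assms by (auto simp: sJ_def)
  then have "delta n lam < sJ lam J / real (card J)"
    using delta_le_average[of J] assms by (simp add: sJ_def)
  then show ?thesis
    using J by (simp add: delta_eq_mean field_simps sJ_def)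
qed

context
  fixes J :: "nat set"
  assumes J: "J \<subseteq> {1..n}" "J \<noteq> {}" "J \<noteq> {1..n}"
begin

lemma centred_sum_neg: "sum lam J \<le> 0 \<Longrightarrow> sum (centred n lam) J < 0"
proof -
  assume "sum lam J \<le> 0"
  moreover have "card J > 0" "n > 0"
    using J by (auto simp: card_gt_0_iff finite_subset)
  then have "0 < real (card J) * ((\<Sum>i=1..n. lam i) / real n)"
    using pos by simp
  ultimately show ?thesis by (simp add: sum_centred)
qed

lemma centred_sum_pos_iff: "0 < sum (centred n lam) J \<longleftrightarrow> 0 < sum lam J"
proof
  show "0 < sum lam J" if "0 < sum (centred n lam) J"
    using that centred_sum_neg by (cases "sum lam J \<le> 0") auto
  show "0 < sum (centred n lam) J" if "0 < sum lam J"
    using mean_less_average[OF J(1,3) that] by (simp add: sum_centred)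
qed

lemma centred_sum_nonzero: "sum (centred n lam) J \<noteq> 0"
  using centred_sum_neg centred_sum_pos_iff by (cases "sum lam J \<le> 0") auto

end

end

section \<open>The cycle lemma\<close>

definition positive_partial_sums :: "real list \<Rightarrow> bool" where
  "positive_partial_sums xs \<longleftrightarrow> (\<forall>t. 0 < t \<and> t < length xs \<longrightarrow> 0 < sum_list (take t xs))"

lemma sum_list_take_drop: "sum_list (take a xs) + sum_list (drop a xs) = sum_list xs"
  by (metis sum_list_append append_take_drop_id)

lemma positive_partial_sums_rotate_unique:
  assumes sum: "sum_list xs = 0" and "xs \<noteq> []"
    and pos: "positive_partial_sums xs" and pos_rot: "positive_partial_sums (rotate c xs)"
  shows "c mod length xs = 0"
proof (rule ccontr)
  define a where "a = c mod length xs"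
  assume "c mod length xs \<noteq> 0"
  then have a: "0 < a" "a < length xs"
    using \<open>xs \<noteq> []\<close> by (auto simp: a_def)
  have "0 < sum_list (take (length xs - a) (rotate c xs))"
    using pos_rot a unfolding positive_partial_sums_def by simp
  then have "0 < sum_list (drop a xs)"
    by (simp add: rotate_drop_take a_def)
  moreover have "0 < sum_list (take a xs)"
    using pos a unfolding positive_partial_sums_def by blast
  ultimately show False
    using sum_list_take_drop[of a xs] sum by simp
qed

lemma ex_rotate_positive_partial_sums:
  assumes sum: "sum_list xs = 0" and "xs \<noteq> []"
    and nonzero: "\<And>a t. 0 < t \<Longrightarrow> t < length xs \<Longrightarrow> sum_list (take t (rotate a xs)) \<noteq> 0"
  shows "\<exists>a<length xs. positive_partial_sums (rotate a xs)"
proof -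
  define k where "k = length xs"
  define s where "s j = sum_list (take j xs)" for j
  have "finite {..<k}" "{..<k} \<noteq> {}"
    using \<open>xs \<noteq> []\<close> by (auto simp: k_def)
  then obtain a where "is_arg_min s (\<lambda>b. b \<in> {..<k}) a"
    using ex_is_arg_min_if_finite by blast
  then have a: "a < k" and min: "\<And>b. b < k \<Longrightarrow> s a \<le> s b"
    by (auto simp: is_arg_min_def not_less) (meson not_le)
  have min_le: "s a \<le> s b" if "b \<le> k" for b
    using min[of b] min[of 0] that sum \<open>xs \<noteq> []\<close>
    by (cases "b = k") (simp_all add: s_def k_def)
  have rot: "rotate a xs = drop a xs @ take a xs"
    using a by (simp add: rotate_drop_take k_def)
  have "0 \<le> sum_list (take t (rotate a xs))" if "t < k" for t
  proof (cases "t \<le> k - a")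
    case True
    then have "sum_list (take t (rotate a xs)) = s (a + t) - s a"
      by (simp add: rot s_def take_add k_def)
    then show ?thesis using min_le[of "a + t"] True a by simp
  next
    case False
    moreover have "t + a - k \<le> a" using that by linarith
    ultimately have "take t (rotate a xs) = drop a xs @ take (t + a - k) xs"
      using a by (simp add: rot k_def min_def)
    then have "sum_list (take t (rotate a xs)) = s (t + a - k) - s a"
      using sum_list_take_drop[of a xs] sum by (simp add: s_def)
    moreover have "s a \<le> s (t + a - k)" using a that by (intro min_le) arith
    ultimately show ?thesis by simp
  qed
  then have "positive_partial_sums (rotate a xs)"
    using nonzero unfolding positive_partial_sums_def k_def by (simp add: order_le_neq_trans)
  with a show ?thesis by (auto simp: k_def)
qed

lemma sum_list_map_sJ:
  assumes "\<forall>B\<in>set Q. finite B" "distinct (concat_blocks Q)"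
  shows "sum_list (map (sJ f) Q) = sum f (\<Union>(set Q))"
  using assms
proof (induction Q)
  case (Cons B Q)
  then have "B \<inter> \<Union>(set Q) = {}" by (auto simp: set_concat_blocks)
  with Cons show ?case by (simp add: sJ_def sum.union_disjoint)
qed simp

lemma sum_list_take_map_sJ:
  assumes "is_ord_partition n P"
  shows "sum_list (take t (map (sJ f) P)) = sum f (\<Union>(set (take t P)))"
proof -
  have "distinct (concat_blocks (take t P) @ concat_blocks (drop t P))"
    using assms by (simp add: is_ord_partition_def flip: concat_blocks_simps(3))
  then show ?thesis
    using assms by (auto simp: take_map is_ord_partition_def dest: in_set_takeD
        intro!: sum_list_map_sJ)
qed

lemma Union_take_proper:
  assumes P: "is_ord_partition n P" and t: "0 < t" "t < length P"
  shows "\<Union>(set (take t P)) \<subseteq> {1..n}" "\<Union>(set (take t P)) \<noteq> {}"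
    "\<Union>(set (take t P)) \<noteq> {1..n}"
proof -
  have U: "\<Union>(set P) = {1..n}" and ne: "\<forall>B\<in>set P. B \<noteq> {}"
    using P is_ord_partition_Union[OF P] by (simp_all add: is_ord_partition_def)
  show "\<Union>(set (take t P)) \<subseteq> {1..n}"
    using U set_take_subset[of t P] by blast
  have "P ! 0 \<in> set (take t P)"
    using t by (auto simp: in_set_conv_nth intro!: exI[of _ 0])
  moreover have "P ! 0 \<in> set P"
    using t by (intro nth_mem) linarith
  then have "P ! 0 \<noteq> {}"
    using ne by blast
  ultimately show "\<Union>(set (take t P)) \<noteq> {}" by blast
  obtain x where x: "x \<in> P ! t" using ne t by (meson all_not_in_conv nth_mem)
  then have "x \<in> {1..n}" using U t by (auto dest: nth_mem)
  moreover have "x \<notin> \<Union>(set (take t P))"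
    using is_ord_partition_block_unique[OF P _ t(2) _ x] t
    by (auto simp: in_set_conv_nth) (metis order.strict_trans less_irrefl)
  ultimately show "\<Union>(set (take t P)) \<noteq> {1..n}" by blast
qed

lemma sum_atMost_eq_sum_list_take:
  assumes "i < length xs"
  shows "(\<Sum>j\<le>i. g (xs ! j)) = sum_list (take (Suc i) (map g xs))"
proof -
  have "length (take (Suc i) (map g xs)) = Suc i"
    using assms by simp
  then have "sum_list (take (Suc i) (map g xs)) = (\<Sum>j<Suc i. take (Suc i) (map g xs) ! j)"
    by (simp only: sum_list_sum_nth atLeast0LessThan)
  also have "\<dots> = (\<Sum>j\<le>i. g (xs ! j))"
    using assms by (simp add: lessThan_Suc_atMost)
  finally show ?thesis ..
qed

context
  fixes n :: nat and lam :: "nat \<Rightarrow> real"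
  assumes pos: "0 < (\<Sum>i=1..n. lam i)" and N: "Nlam n lam = n"
begin

lemma P_ord_iff:
  "P \<in> P_ord n lam \<longleftrightarrow>
     is_ord_partition n P \<and> positive_partial_sums (map (sJ (centred n lam)) P)"
proof (cases "is_ord_partition n P")
  case P: True
  let ?U = "\<lambda>t. \<Union>(set (take t P))"
  have "(\<forall>i<length P. 0 < (\<Sum>j\<le>i. sJ lam (P ! j)))
      \<longleftrightarrow> (\<forall>t. 0 < t \<and> t \<le> length P \<longrightarrow> 0 < sum lam (?U t))"
    by (auto simp: sum_atMost_eq_sum_list_take sum_list_take_map_sJ[OF P] gr0_conv_Suc)
  also have "\<dots> \<longleftrightarrow> (\<forall>t. 0 < t \<and> t < length P \<longrightarrow> 0 < sum lam (?U t))"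
    using pos is_ord_partition_Union[OF P] by (auto simp: le_less)
  also have "\<dots> \<longleftrightarrow> (\<forall>t. 0 < t \<and> t < length P \<longrightarrow> 0 < sum (centred n lam) (?U t))"
    using centred_sum_pos_iff[OF pos N] Union_take_proper[OF P] by auto
  finally show ?thesis
    using P by (simp add: P_ord_def ordered_partitions_iff positive_partial_sums_def
        sum_list_take_map_sJ)
qed (simp add: P_ord_def ordered_partitions_iff)

lemma P0_ord_iff:
  "P \<in> P0_ord n lam \<longleftrightarrow>
     is_ord_partition n P \<and> positive_partial_sums (map (sJ (centred n lam)) P) \<and>
     odd_blocks P \<le> 1"
  by (simp add: P0_ord_def P_ord_iff card_odd_blocks)

end

section \<open>Rotation classes\<close>

definition block_index :: "nat set list \<Rightarrow> nat \<Rightarrow> nat" where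
  "block_index P x = (LEAST i. i < length P \<and> x \<in> P ! i)"

lemma block_index_eq:
  assumes "is_ord_partition n P" "i < length P" "x \<in> P ! i"
  shows "block_index P x = i"
  unfolding block_index_def
proof (rule Least_equality)
  show "\<And>j. j < length P \<and> x \<in> P ! j \<Longrightarrow> i \<le> j"
    using is_ord_partition_block_unique[OF assms(1)] assms(2,3) by fastforce
qed (use assms in simp)

lemma block_index:
  assumes "is_ord_partition n P" "x \<in> {1..n}"
  shows "block_index P x < length P" "x \<in> P ! block_index P x"
proof -
  have "x \<in> \<Union>(set P)"
    using assms is_ord_partition_Union[OF assms(1)] by simp
  then obtain i where "i < length P" "x \<in> P ! i"
    by (metis UnionE in_set_conv_nth)
  with block_index_eq[OF assms(1) this]
  show "block_index P x < length P" "x \<in> P ! block_index P x"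
    by simp_all
qed

lemma rotate_eq_if_same_first_block:
  assumes P: "is_ord_partition n P" and "x \<in> P ! 0" "x \<in> rotate c P ! 0" and "P \<noteq> []"
  shows "rotate c P = P"
proof -
  have "x \<in> P ! (c mod length P)"
    using assms(3,4) by (simp add: nth_rotate)
  then have "c mod length P = 0"
    using is_ord_partition_block_unique[OF P _ _ _ assms(2)] \<open>P \<noteq> []\<close> by simp
  then show ?thesis by (metis rotate_conv_mod rotate0 id_apply)
qed

lemma rotate_eq_if_positive_partial_sums:
  assumes P: "is_ord_partition n P" and "n \<ge> 1" and sum: "sum f {1..n} = 0"
    and "positive_partial_sums (map (sJ f) P)" "positive_partial_sums (map (sJ f) (rotate c P))"
  shows "rotate c P = P"
proof -
  have "P \<noteq> []"
    using P \<open>n \<ge> 1\<close> by (auto simp: is_ord_partition_def)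
  moreover have "sum_list (map (sJ f) P) = 0"
    using sum_list_take_map_sJ[OF P, of "length P" f] is_ord_partition_Union[OF P] sum by simp
  ultimately have "c mod length P = 0"
    using positive_partial_sums_rotate_unique[of "map (sJ f) P" c] assms(4,5)
    by (simp add: rotate_map)
  then show ?thesis by (metis rotate_conv_mod rotate0 id_apply)
qed

lemma ex_rotate_positive:
  assumes P: "is_ord_partition n P" and "n \<ge> 1" and sum: "sum f {1..n} = 0"
    and nonzero: "\<And>J. J \<subseteq> {1..n} \<Longrightarrow> J \<noteq> {} \<Longrightarrow> J \<noteq> {1..n} \<Longrightarrow> sum f J \<noteq> 0"
  shows "\<exists>a. positive_partial_sums (map (sJ f) (rotate a P))"
proof -
  have "P \<noteq> []"
    using P \<open>n \<ge> 1\<close> by (auto simp: is_ord_partition_def)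
  moreover have "sum_list (map (sJ f) P) = 0"
    using sum_list_take_map_sJ[OF P, of "length P" f] is_ord_partition_Union[OF P] sum by simp
  moreover have "sum_list (take t (rotate a (map (sJ f) P))) \<noteq> 0"
    if "0 < t" "t < length (map (sJ f) P)" for a t
  proof -
    have Pa: "is_ord_partition n (rotate a P)"
      by (rule is_ord_partition_rotate[OF P])
    show ?thesis
      using that nonzero Union_take_proper[OF Pa]
      by (simp add: rotate_map sum_list_take_map_sJ[OF Pa])
  qed
  ultimately show ?thesis
    using ex_rotate_positive_partial_sums[of "map (sJ f) P"] by (auto simp: rotate_map)
qed

definition anchored :: "nat \<Rightarrow> nat set list set" where
  "anchored n = {P. is_ord_partition n P \<and> odd_blocks P \<le> 1 \<and> n \<in> P ! 0}"

definition anchor_rotation :: "nat \<Rightarrow> nat set list \<Rightarrow> nat set list" where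
  "anchor_rotation n P = rotate (block_index P n) P"

definition positive_rotation :: "(nat \<Rightarrow> real) \<Rightarrow> nat set list \<Rightarrow> nat set list" where
  "positive_rotation f P = rotate (SOME a. positive_partial_sums (map (sJ f) (rotate a P))) P"

lemma anchor_rotation_first:
  assumes "is_ord_partition n P" "n \<ge> 1"
  shows "n \<in> anchor_rotation n P ! 0"
  using block_index[OF assms(1), of n] assms(2)
  unfolding anchor_rotation_def by (subst nth_rotate) auto

lemma positive_rotation:
  "\<exists>a. positive_partial_sums (map (sJ f) (rotate a P)) \<Longrightarrow>
    positive_partial_sums (map (sJ f) (positive_rotation f P))"
  unfolding positive_rotation_def by (rule someI_ex)

context
  fixes n :: nat and lam :: "nat \<Rightarrow> real"
  assumes n: "n \<ge> 1" and pos: "0 < (\<Sum>i=1..n. lam i)" and N: "Nlam n lam = n"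
begin

lemma positive_rotation_centred:
  "is_ord_partition n P \<Longrightarrow>
    positive_partial_sums (map (sJ (centred n lam)) (positive_rotation (centred n lam) P))"
  using ex_rotate_positive[OF _ n sum_centred_full[OF n]] centred_sum_nonzero[OF pos N]
  by (intro positive_rotation) blast

lemma sum_P0_ord_eq_sum_anchored:
  "(\<Sum>P\<in>P0_ord n lam. weight P) = (\<Sum>P\<in>anchored n. weight P)"
proof (rule sum.reindex_bij_witness[where i = "positive_rotation (centred n lam)"
      and j = "anchor_rotation n"])
  fix Q assume "Q \<in> P0_ord n lam"
  then have Q: "is_ord_partition n Q" "positive_partial_sums (map (sJ (centred n lam)) Q)"
    "odd_blocks Q \<le> 1"
    using P0_ord_iff[OF pos N] by auto
  have QA: "is_ord_partition n (anchor_rotation n Q)"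
    using Q(1) by (simp add: anchor_rotation_def is_ord_partition_rotate)
  then show "anchor_rotation n Q \<in> anchored n"
    using anchor_rotation_first[OF Q(1) n] Q(3)
    by (simp add: anchored_def anchor_rotation_def odd_blocks_rotate)
  show "weight (anchor_rotation n Q) = weight Q"
    using Q by (simp add: anchor_rotation_def weight_rotate)
  show "positive_rotation (centred n lam) (anchor_rotation n Q) = Q"
    using rotate_eq_if_positive_partial_sums[OF Q(1) n sum_centred_full[OF n] Q(2)]
      positive_rotation_centred[OF QA]
    by (simp add: positive_rotation_def anchor_rotation_def rotate_rotate)
next
  fix P assume "P \<in> anchored n"
  then have P: "is_ord_partition n P" "odd_blocks P \<le> 1" "n \<in> P ! 0"
    by (auto simp: anchored_def)
  have PR: "is_ord_partition n (positive_rotation (centred n lam) P)"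
    using P(1) by (simp add: positive_rotation_def is_ord_partition_rotate)
  then show "positive_rotation (centred n lam) P \<in> P0_ord n lam"
    using P0_ord_iff[OF pos N] positive_rotation_centred[OF P(1)] P(2)
    by (simp add: positive_rotation_def odd_blocks_rotate)
  have "P \<noteq> []"
    using P(1) n by (auto simp: is_ord_partition_def)
  then show "anchor_rotation n (positive_rotation (centred n lam) P) = P"
    using rotate_eq_if_same_first_block[OF P(1) P(3)] anchor_rotation_first[OF PR n]
    by (simp add: positive_rotation_def anchor_rotation_def rotate_rotate)
qed

end

section \<open>A sign-reversing involution\<close>

definition together :: "nat set list \<Rightarrow> nat \<Rightarrow> nat \<Rightarrow> bool" where
  "together P a b \<longleftrightarrow> (\<exists>B\<in>set P. a \<in> B \<and> b \<in> B)"

definition separated_pairs :: "nat \<Rightarrow> nat set list \<Rightarrow> nat set" where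
  "separated_pairs n P = {j. 1 \<le> j \<and> 2 * j < n \<and> \<not> together P (2 * j - 1) (2 * j)}"

definition merge_or_split_12 :: "nat set list \<Rightarrow> nat set list" where
  "merge_or_split_12 P = (let i = block_index P 1 in
     if P ! i = {1, 2} \<and> 0 < i then take (i - 1) P @ [{1, 2} \<union> P ! (i - 1)] @ drop (Suc i) P
     else take i P @ [P ! i - {1, 2}, {1, 2}] @ drop (Suc i) P)"

definition flip_partition :: "nat \<Rightarrow> nat set list \<Rightarrow> nat set list" where
  "flip_partition n P =
    (if separated_pairs n P = {} then merge_or_split_12 P
     else let j = Min (separated_pairs n P) in
       map ((`) (Transposition.transpose (2 * j - 1) (2 * j))) P)"

context
  fixes A C :: "nat set list" and B :: "nat set"
  assumes B: "B \<noteq> {}" "\<forall>x\<in>B. 2 < x"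
begin

lemma merge_or_split_12_split:
  assumes "is_ord_partition n (A @ [B, {1, 2}] @ C)"
  shows "merge_or_split_12 (A @ [B, {1, 2}] @ C) = A @ [{1, 2} \<union> B] @ C"
proof -
  have "block_index (A @ [B, {1, 2}] @ C) 1 = Suc (length A)"
    using assms by (rule block_index_eq) (auto simp: nth_append)
  then show ?thesis by (simp add: merge_or_split_12_def nth_append)
qed

lemma merge_or_split_12_merge:
  assumes "is_ord_partition n (A @ [{1, 2} \<union> B] @ C)"
  shows "merge_or_split_12 (A @ [{1, 2} \<union> B] @ C) = A @ [B, {1, 2}] @ C"
proof -
  have "block_index (A @ [{1, 2} \<union> B] @ C) 1 = length A"
    using assms by (rule block_index_eq) (auto simp: nth_append)
  moreover have "{1, 2} \<union> B \<noteq> {1, 2}"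
  proof
    assume "{1, 2} \<union> B = {1, 2}"
    then have "B \<subseteq> {1, 2}" by blast
    with B show False by fastforce
  qed
  moreover have "{1, 2} \<union> B - {1, 2} = B"
    using B by auto
  ultimately show ?thesis by (simp add: merge_or_split_12_def nth_append)
qed

lemma separated_pairs_merge:
  "separated_pairs n (A @ [{1, 2} \<union> B] @ C) = separated_pairs n (A @ [B, {1, 2}] @ C)"
proof -
  have "together (A @ [{1, 2} \<union> B] @ C) (2 * j - 1) (2 * j) \<longleftrightarrow>
      together (A @ [B, {1, 2}] @ C) (2 * j - 1) (2 * j)" if "1 \<le> j" for j
    using that B by (cases "j = 1") (auto simp: together_def)
  then show ?thesis unfolding separated_pairs_def by blast
qed

end

lemma anchored_split_12_cases:
  assumes P: "P \<in> anchored n" and n: "n \<ge> 3" and sep: "separated_pairs n P = {}"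
  obtains A B C where "B \<noteq> {}" "\<forall>x\<in>B. 2 < x" "is_ord_partition n (A @ [B, {1, 2}] @ C)"
    and "P = A @ [B, {1, 2}] @ C \<or> P = A @ [{1, 2} \<union> B] @ C"
proof -
  have Pp: "is_ord_partition n P" and nP: "n \<in> P ! 0"
    using P by (auto simp: anchored_def)
  have ge1: "1 \<le> x" if "j < length P" "x \<in> P ! j" for j x
    using that is_ord_partition_Union[OF Pp] nth_mem[of j P] by fastforce
  have ne: "P ! j \<noteq> {}" if "j < length P" for j
    using that Pp nth_mem[of j P] by (auto simp: is_ord_partition_def)
  have "1 \<notin> separated_pairs n P"
    using sep by simp
  then have "together P 1 2"
    using n by (simp add: separated_pairs_def)
  then obtain i where i: "i < length P" "1 \<in> P ! i" "2 \<in> P ! i"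
    by (auto simp: together_def in_set_conv_nth)
  show ?thesis
  proof (cases "P ! i = {1, 2} \<and> 0 < i")
    case True
    have "P ! (i - 1) # drop i P = drop (i - 1) P"
      using Cons_nth_drop_Suc[of "i - 1" P] True i(1) by simp
    then have "P = take (i - 1) P @ [P ! (i - 1), P ! i] @ drop (Suc i) P"
      using Cons_nth_drop_Suc[OF i(1)] by simp
    moreover have "\<forall>x\<in>P ! (i - 1). 2 < x"
    proof
      fix x assume x: "x \<in> P ! (i - 1)"
      have i1: "i - 1 < length P" "i - 1 \<noteq> i"
        using i(1) True by auto
      then have "x \<notin> P ! i"
        using is_ord_partition_block_unique[OF Pp i1(1) i(1) x] by auto
      moreover have "1 \<le> x"
        using ge1[OF i1(1) x] .
      ultimately show "2 < x"
        using True by auto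
    qed
    moreover have "P ! (i - 1) \<noteq> {}"
      using ne i(1) by simp
    ultimately show ?thesis
      using that[of "P ! (i - 1)" "take (i - 1) P" "drop (Suc i) P"] Pp True by simp
  next
    case False
    define B where "B = P ! i - {1, 2}"
    have PM: "P = take i P @ [{1, 2} \<union> B] @ drop (Suc i) P"
      using i by (simp add: B_def insert_absorb Cons_nth_drop_Suc)
    have "B \<noteq> {}"
    proof
      assume "B = {}"
      then have "P ! i = {1, 2}" using i by (auto simp: B_def)
      with False nP n show False by auto
    qed
    have B2: "\<forall>x\<in>B. 2 < x"
    proof
      fix x assume "x \<in> B"
      then show "2 < x" using ge1[OF i(1), of x] by (auto simp: B_def)
    qed
    then have less: "\<forall>x\<in>{1, 2}. \<forall>y\<in>B. x < y"
      by auto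
    have "finite B"
      using Pp i(1) by (auto simp: B_def is_ord_partition_def)
    have "is_ord_partition n (take i P @ [{1, 2} \<union> B] @ drop (Suc i) P)"
      using Pp by (subst (asm) PM)
    then have "is_ord_partition n (take i P @ [B, {1, 2}] @ drop (Suc i) P)"
      using is_ord_partition_merge_iff[OF \<open>finite B\<close> _ less \<open>B \<noteq> {}\<close>] by simp
    then show ?thesis
      using that[OF \<open>B \<noteq> {}\<close> B2] PM by blast
  qed
qed

lemma flip_partition_merge_split:
  assumes P: "P \<in> anchored n" and n: "n \<ge> 3" and sep: "separated_pairs n P = {}"
  shows "flip_partition n P \<in> anchored n \<and> flip_partition n (flip_partition n P) = P \<and>
    weight (flip_partition n P) = - weight P"
proof -
  obtain A B C where B: "B \<noteq> {}" "\<forall>x\<in>B. 2 < x"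
    and S: "is_ord_partition n (A @ [B, {1, 2}] @ C)" and cases: "P = A @ [B, {1, 2}] @ C \<or> P = A @ [{1, 2} \<union> B] @ C"
    by (rule anchored_split_12_cases[OF P n sep])
  define S M where "S = A @ [B, {1, 2}] @ C" and "M = A @ [{1, 2} \<union> B] @ C"
  have fin: "finite B" and less: "\<forall>x\<in>{1, 2}. \<forall>y\<in>B. x < y"
    using S B(2) by (auto simp: is_ord_partition_def)
  have M: "is_ord_partition n M"
    unfolding M_def using is_ord_partition_merge_iff[OF fin _ less B(1)] S by simp
  have "odd_blocks M = odd_blocks S"
    unfolding M_def S_def using odd_blocks_merge[OF fin _ less] by simp
  moreover have "n \<in> M ! 0 \<longleftrightarrow> n \<in> S ! 0"
    using n by (cases A) (auto simp: S_def M_def)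
  ultimately have anchored: "M \<in> anchored n \<longleftrightarrow> S \<in> anchored n"
    using S M unfolding anchored_def S_def by simp
  have weight: "weight M = - weight S"
    unfolding M_def S_def using weight_merge[OF fin _ less S] by simp
  have sep_eq: "separated_pairs n M = separated_pairs n S"
    unfolding S_def M_def by (rule separated_pairs_merge[OF B])
  moreover have "merge_or_split_12 S = M" "merge_or_split_12 M = S"
    unfolding S_def M_def
    using merge_or_split_12_split[OF B S] merge_or_split_12_merge[OF B M[unfolded M_def]]
    by simp_all
  ultimately have "flip_partition n S = M" "flip_partition n M = S"
    if "separated_pairs n S = {}"
    using that by (simp_all add: flip_partition_def)
  then show ?thesis
    using cases P sep anchored weight sep_eq unfolding S_def[symmetric] M_def[symmetric] by auto
qed

lemma strict_mono_on_transpose_Suc: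
  "\<not> (v \<in> B \<and> Suc v \<in> B) \<Longrightarrow> strict_mono_on B (Transposition.transpose v (Suc v))"
  by (auto simp: strict_mono_on_def Transposition.transpose_def)

lemma together_map_involution:
  assumes "\<And>x. f (f x) = x"
  shows "together (map ((`) f) P) a b \<longleftrightarrow> together P (f a) (f b)"
proof -
  have "x \<in> f ` B \<longleftrightarrow> f x \<in> B" for x B
    using assms by (metis imageE image_eqI)
  then show ?thesis by (auto simp: together_def)
qed

lemma flip_partition_transpose:
  assumes P: "P \<in> anchored n" and sep: "separated_pairs n P \<noteq> {}"
  shows "flip_partition n P \<in> anchored n \<and> flip_partition n (flip_partition n P) = P \<and>
    weight (flip_partition n P) = - weight P"
proof -
  have Pp: "is_ord_partition n P" and odd: "odd_blocks P \<le> 1" and nP: "n \<in> P ! 0"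
    using P by (auto simp: anchored_def)
  define j where "j = Min (separated_pairs n P)"
  define \<tau> where "\<tau> = Transposition.transpose (2 * j - 1) (2 * j)"
  define Q where "Q = map ((`) \<tau>) P"
  have "finite (separated_pairs n P)"
    by (rule finite_subset[of _ "{..n}"]) (auto simp: separated_pairs_def)
  then have "j \<in> separated_pairs n P"
    using sep by (simp add: j_def)
  then have j: "1 \<le> j" "2 * j < n" "\<not> together P (2 * j - 1) (2 * j)"
    by (auto simp: separated_pairs_def)
  have \<tau>: "\<tau> permutes {1..n}"
    unfolding \<tau>_def using j by (intro permutes_swap_id) auto
  have "\<forall>B\<in>set P. strict_mono_on B \<tau>"
    using j strict_mono_on_transpose_Suc[of "2 * j - 1"] by (auto simp: \<tau>_def together_def)
  note image = is_ord_partition_map_image[OF \<tau> Pp this] odd_blocks_map_image[OF \<tau> Pp this]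
    weight_map_image[OF \<tau> Pp this]
  have "sign \<tau> = -1"
    using j by (simp add: \<tau>_def sign_swap_id)
  then have weight: "weight Q = - weight P"
    using image by (simp add: Q_def)
  have "\<tau> n = n"
    using j by (simp add: \<tau>_def)
  moreover have "P \<noteq> []"
    using Pp j by (auto simp: is_ord_partition_def)
  ultimately have "n \<in> Q ! 0"
    using nP by (auto simp: Q_def in_transpose_image_iff \<tau>_def)
  then have Q: "Q \<in> anchored n"
    using image odd by (simp add: anchored_def Q_def)
  have together_Q: "together Q a b \<longleftrightarrow> together P (\<tau> a) (\<tau> b)" for a b
    unfolding Q_def by (rule together_map_involution) (simp add: \<tau>_def)
  have "together Q (2 * i - 1) (2 * i) \<longleftrightarrow> together P (2 * i - 1) (2 * i)" if "1 \<le> i" for i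
  proof (cases "i = j")
    case True
    then have "\<tau> (2 * i - 1) = 2 * i" "\<tau> (2 * i) = 2 * i - 1"
      using j by (simp_all add: \<tau>_def)
    then have "together Q (2 * i - 1) (2 * i) \<longleftrightarrow> together P (2 * i) (2 * i - 1)"
      by (simp add: together_Q)
    then show ?thesis
      unfolding together_def by blast
  next
    case False
    then have "2 * i - 1 \<noteq> 2 * j - 1" "2 * i - 1 \<noteq> 2 * j"
      "2 * i \<noteq> 2 * j - 1" "2 * i \<noteq> 2 * j"
      using j(1) that by presburger+
    then have "\<tau> (2 * i - 1) = 2 * i - 1" "\<tau> (2 * i) = 2 * i"
      by (simp_all add: \<tau>_def transpose_apply_other)
    then show ?thesis
      by (simp add: together_Q)
  qed
  then have sep_Q: "separated_pairs n Q = separated_pairs n P"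
    unfolding separated_pairs_def by blast
  have flip_P: "flip_partition n P = Q"
    using sep unfolding flip_partition_def Let_def j_def[symmetric] \<tau>_def[symmetric] Q_def
    by simp
  have "flip_partition n Q = map ((`) \<tau>) Q"
    using sep unfolding flip_partition_def Let_def sep_Q j_def[symmetric] \<tau>_def[symmetric]
    by simp
  also have "\<dots> = P"
    by (simp add: Q_def \<tau>_def comp_def image_image)
  finally show ?thesis
    using Q weight flip_P by simp
qed

lemma flip_partition_sign_reversing_involution:
  assumes "P \<in> anchored n" "n \<ge> 3"
  shows "flip_partition n P \<in> anchored n \<and> flip_partition n (flip_partition n P) = P \<and>
    weight (flip_partition n P) = - weight P"
  using flip_partition_transpose[OF assms(1)] flip_partition_merge_split[OF assms]
  by (cases "separated_pairs n P = {}") auto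

lemma sum_anchored_weight:
  assumes "n \<ge> 3"
  shows "(\<Sum>P\<in>anchored n. weight P) = 0"
proof -
  have "(\<Sum>P\<in>anchored n. weight P) = (\<Sum>P\<in>anchored n. - weight P)"
    using flip_partition_sign_reversing_involution[OF _ assms]
    by (intro sum.reindex_bij_witness[where i = "flip_partition n" and j = "flip_partition n"])
      auto
  then show ?thesis by (simp add: sum_negf)
qed

theorem mainTheorem9:
  fixes n :: nat and lam :: "nat \<Rightarrow> real"
  assumes "n \<ge> 3"
    and "(\<Sum>i=1..n. lam i) > 0"
    and "Nlam n lam = n"
  shows "(\<Sum>P\<in>P0_ord n lam. (-1) ^ length P * eps P * eps' P) = (0::int)"
proof -
  have "n \<ge> 1" using assms(1) by simp
  have "(\<Sum>P\<in>P0_ord n lam. (-1) ^ length P * eps P * eps' P)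
      = (\<Sum>P\<in>P0_ord n lam. weight P)"
    by (simp add: weight_def)
  also have "\<dots> = (\<Sum>P\<in>anchored n. weight P)"
    by (rule sum_P0_ord_eq_sum_anchored[OF \<open>n \<ge> 1\<close> assms(2,3)])
  also have "\<dots> = 0"
    by (rule sum_anchored_weight[OF assms(1)])
  finally show ?thesis .
qed

end
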